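(* Let $\mathbb{K}$ be a field, $m\ge 3$, $R=\mathbb{K}[T_1,\dots,T_m]$, $\mathbf{b}=(b_1,\dots,b_m)\in\mathbb{N}^m$ with $b_i\ne0$ for at least two $i$, $|\mathbf{b}|=\sum b_i$, and $I=\langle T_1^{|\mathbf{b}|},\dots,T_m^{|\mathbf{b}|},T_1^{b_1}\cdots T_m^{b_m}\rangle$ (the equi-generated case). Let $L\subset S=R[X_1,\dots,X_m,W]$ be the defining ideal of the Rees algebra of $I$ and $L_1$ its component of degree one in $X_1,\dots,X_m,W$. If $\ell\in\mathbb{Z}$ satisfies $\ell\ge\frac{(m-1)(|\mathbf{b}|-1)}{m}$, then $L_1S:(T_1T_2\cdots T_m)^{\ell}=L$. In particular, $L_1S:(T_1T_2\cdots T_m)^{|\mathbf{b}|}=L$.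
   Context: $L$ is the kernel of the $R$-algebra map $S\to R[Z]$ given by $X_i\mapsto T_i^{|\mathbf{b}|}Z$ and $W\mapsto T_1^{b_1}\cdots T_m^{b_m}Z$; it is graded by total degree in $X_1,\dots,X_m,W$. *)

theory Defs
  imports Complex_Main "HOL-Library.Poly_Mapping"
begin

text \<open>Variables: T i (coordinates of R), X i, W (Rees variables of S), Z (target variable of R[Z]).
Indices run over 1..m.\<close>
datatype var = T nat | X nat | W | Z

type_synonym 'k mpoly = "(var \<Rightarrow>\<^sub>0 nat) \<Rightarrow>\<^sub>0 'k"

definition Var :: "var \<Rightarrow> 'k::comm_ring_1 mpoly" where
  "Var v = Poly_Mapping.single (Poly_Mapping.single v 1) 1"

definition Const :: "'k::comm_ring_1 \<Rightarrow> 'k mpoly" where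
  "Const c = Poly_Mapping.single 0 c"

definition subst :: "(var \<Rightarrow> 'k::comm_ring_1 mpoly) \<Rightarrow> 'k mpoly \<Rightarrow> 'k mpoly" where
  "subst \<sigma> p = (\<Sum>mon\<in>Poly_Mapping.keys p. Const (Poly_Mapping.lookup p mon) *
                    (\<Prod>v\<in>Poly_Mapping.keys mon. (\<sigma> v) ^ (Poly_Mapping.lookup mon v)))"

definition S_vars :: "nat \<Rightarrow> var set" where
  "S_vars m = {T i | i. 1 \<le> i \<and> i \<le> m} \<union> {X i | i. 1 \<le> i \<and> i \<le> m} \<union> {W}"

definition in_S :: "nat \<Rightarrow> 'k::comm_ring_1 mpoly \<Rightarrow> bool" where
  "in_S m p \<longleftrightarrow> (\<forall>mon\<in>Poly_Mapping.keys p. Poly_Mapping.keys mon \<subseteq> S_vars m)"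

definition bsum :: "nat \<Rightarrow> (nat \<Rightarrow> nat) \<Rightarrow> nat" where
  "bsum m b = (\<Sum>i=1..m. b i)"

definition rees_map :: "nat \<Rightarrow> (nat \<Rightarrow> nat) \<Rightarrow> var \<Rightarrow> 'k::comm_ring_1 mpoly" where
  "rees_map m b v = (case v of
      T i \<Rightarrow> Var (T i)
    | X i \<Rightarrow> Var (T i) ^ bsum m b * Var Z
    | W \<Rightarrow> (\<Prod>i=1..m. Var (T i) ^ b i) * Var Z
    | Z \<Rightarrow> Var Z)"

definition rees_ideal :: "nat \<Rightarrow> (nat \<Rightarrow> nat) \<Rightarrow> 'k::comm_ring_1 mpoly set" where
  "rees_ideal m b = {p. in_S m p \<and> subst (rees_map m b) p = 0}"

definition is_XW :: "var \<Rightarrow> bool" where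
  "is_XW v \<longleftrightarrow> (case v of X _ \<Rightarrow> True | W \<Rightarrow> True | _ \<Rightarrow> False)"

definition xw_deg :: "(var \<Rightarrow>\<^sub>0 nat) \<Rightarrow> nat" where
  "xw_deg mon = (\<Sum>v\<in>{v\<in>Poly_Mapping.keys mon. is_XW v}. Poly_Mapping.lookup mon v)"

definition rees_ideal_1 :: "nat \<Rightarrow> (nat \<Rightarrow> nat) \<Rightarrow> 'k::comm_ring_1 mpoly set" where
  "rees_ideal_1 m b = {p \<in> rees_ideal m b. \<forall>mon\<in>Poly_Mapping.keys p. xw_deg mon = 1}"

definition S_ideal :: "nat \<Rightarrow> 'k::comm_ring_1 mpoly set \<Rightarrow> 'k mpoly set" where
  "S_ideal m G = {(\<Sum>i<n. s i * g i) | (n::nat) s g. \<forall>i<n. in_S m (s i) \<and> g i \<in> G}"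

definition S_colon :: "nat \<Rightarrow> 'k::comm_ring_1 mpoly set \<Rightarrow> 'k mpoly \<Rightarrow> 'k mpoly set" where
  "S_colon m J f = {h. in_S m h \<and> f * h \<in> J}"

definition T_prod :: "nat \<Rightarrow> 'k::comm_ring_1 mpoly" where
  "T_prod m = (\<Prod>i=1..m. Var (T i))"

end

theory Submission
  imports Defs
begin

text \<open>Since \<open>L\<close> is the kernel of a monomial map, it is spanned by binomials
  \<open>T^\<alpha> X^\<beta> W^\<gamma> - T^\<alpha>' X^\<beta>' W^\<gamma>'\<close> of monomials with the same image. Two kinds of elements
  of \<open>L\<^sub>1\<close> act as moves on monomials: \<open>X\<^sub>i T\<^sub>j^|b| \<leftrightarrow> X\<^sub>j T\<^sub>i^|b|\<close> and
  \<open>X\<^sub>i \<Prod>\<^sub>k\<^sub>\<noteq>\<^sub>i T\<^sub>k^(b\<^sub>k) \<leftrightarrow> W T\<^sub>i^(|b|-b\<^sub>i)\<close>. If the total \<open>T\<close>-degree is at least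
  \<open>(m-1)(|b|-1)\<close>, a counting argument on the exponents always allows a move raising the
  \<open>W\<close>-degree towards that of the target, and at equal \<open>W\<close>-degree the first kind of move
  connects any two monomials of the same fibre. Multiplying by \<open>(T\<^sub>1\<cdots>T\<^sub>m)^l\<close> with
  \<open>ml \<ge> (m-1)(|b|-1)\<close> reaches this degree, so \<open>L \<subseteq> L\<^sub>1S : (T\<^sub>1\<cdots>T\<^sub>m)^l\<close>; the other
  inclusion holds because monomials are nonzerodivisors in \<open>R[Z]\<close>.\<close>

alias keys = Poly_Mapping.keys
alias lookup = Poly_Mapping.lookup
alias single = Poly_Mapping.single

lemma sum_lessThan_add:
  fixes f :: "nat \<Rightarrow> 'a::comm_monoid_add"
  shows "(\<Sum>j<x + y. f j) = (\<Sum>j<x. f j) + (\<Sum>j<y. f (x + j))"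
  by (induction y) (simp_all add: add.assoc)

lemma single_one_power: "single a (1::'k::comm_semiring_1) ^ n = single (\<Sum>j<n. a) 1"
  by (induction n) (simp_all add: mult_single add.commute)

lemma prod_single_one:
  "(\<Prod>v\<in>A. single (f v) (1::'k::comm_semiring_1)) = single (\<Sum>v\<in>A. f v) 1"
  by (induction A rule: infinite_finite_induct) (simp_all add: mult_single)

lemma sum_single_lookup: "(\<Sum>u\<in>keys p. single u (lookup p u)) = p"
proof (rule poly_mapping_eqI)
  fix x
  show "lookup (\<Sum>u\<in>keys p. single u (lookup p u)) x = lookup p x"
    by (cases "x \<in> keys p") (simp_all add: lookup_sum lookup_single when_def in_keys_iff)
qed

lemma single_one_mult_eq_0_iff:
  fixes q :: "('a::cancel_comm_monoid_add \<Rightarrow>\<^sub>0 'k::comm_semiring_1)"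
  shows "single a 1 * q = 0 \<longleftrightarrow> q = 0"
proof
  assume prod: "single a 1 * q = 0"
  show "q = 0"
  proof (rule poly_mapping_eqI)
    fix y
    have "single a 1 * q = (\<Sum>u\<in>keys q. single (a + u) (lookup q u))"
      by (subst (1) sum_single_lookup[symmetric]) (simp add: sum_distrib_left mult_single)
    then have "lookup (single a 1 * q) (a + y) = lookup q y"
      by (simp add: lookup_sum lookup_single when_def sum.delta' in_keys_iff)
    then show "lookup q y = lookup 0 y"
      using prod by simp
  qed
qed simp

text \<open>The exponent of \<open>\<Prod>\<^sub>v (x^(r v))^(u v)\<close>; the inner sum is the multiple \<open>u v \<cdot> r v\<close>.\<close>
definition exp_image :: "('v \<Rightarrow> ('w \<Rightarrow>\<^sub>0 nat)) \<Rightarrow> ('v \<Rightarrow>\<^sub>0 nat) \<Rightarrow> ('w \<Rightarrow>\<^sub>0 nat)" where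
  "exp_image r u = (\<Sum>v\<in>keys u. \<Sum>j<lookup u v. r v)"

lemma exp_image_add: "exp_image r (u + u') = exp_image r u + exp_image r u'"
  unfolding exp_image_def by (rule setsum_keys_plus_distrib) (simp_all add: sum_lessThan_add)

lemma exp_image_zero [simp]: "exp_image r 0 = 0"
  by (simp add: exp_image_def)

lemma exp_image_sum: "exp_image r (\<Sum>a\<in>A. f a) = (\<Sum>a\<in>A. exp_image r (f a))"
  by (induction A rule: infinite_finite_induct) (simp_all add: exp_image_add)

lemma lookup_exp_image_single:
  "lookup (exp_image r (single v n)) w = n * lookup (r v) w"
  by (simp add: exp_image_def lookup_sum)

definition mono_subst ::
  "('v \<Rightarrow> ('w \<Rightarrow>\<^sub>0 nat)) \<Rightarrow> (('v \<Rightarrow>\<^sub>0 nat) \<Rightarrow>\<^sub>0 'k::comm_semiring_1) \<Rightarrow> (('w \<Rightarrow>\<^sub>0 nat) \<Rightarrow>\<^sub>0 'k)"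
where
  "mono_subst r p = (\<Sum>u\<in>keys p. single (exp_image r u) (lookup p u))"

lemma mono_subst_single [simp]: "mono_subst r (single u c) = single (exp_image r u) c"
  by (simp add: mono_subst_def)

lemma mono_subst_zero [simp]: "mono_subst r 0 = 0"
  by (simp add: mono_subst_def)

lemma mono_subst_add: "mono_subst r (p + q) = mono_subst r p + mono_subst r q"
  unfolding mono_subst_def by (rule setsum_keys_plus_distrib) (simp_all add: single_add)

lemma mono_subst_sum: "mono_subst r (\<Sum>a\<in>A. f a) = (\<Sum>a\<in>A. mono_subst r (f a))"
  by (induction A rule: infinite_finite_induct) (simp_all add: mono_subst_add)

lemma mono_subst_diff:
  fixes p :: "('v \<Rightarrow>\<^sub>0 nat) \<Rightarrow>\<^sub>0 'k::comm_ring_1"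
  shows "mono_subst r (p - q) = mono_subst r p - mono_subst r q"
  using mono_subst_add[of r "p - q" q] by (simp add: eq_diff_eq)

lemma mono_subst_mult: "mono_subst r (p * q) = mono_subst r p * mono_subst r q"
proof -
  have "mono_subst r (p * q) = mono_subst r
      ((\<Sum>u\<in>keys p. single u (lookup p u)) * (\<Sum>u\<in>keys q. single u (lookup q u)))"
    by (simp only: sum_single_lookup)
  also have "\<dots> = (\<Sum>u\<in>keys p. \<Sum>u'\<in>keys q.
      single (exp_image r u) (lookup p u) * single (exp_image r u') (lookup q u'))"
    by (simp add: sum_product mult_single mono_subst_sum exp_image_add)
  also have "\<dots> = mono_subst r p * mono_subst r q"
    by (simp add: mono_subst_def sum_product)
  finally show ?thesis .
qed

lemma subst_eq_mono_subst:
  assumes "\<And>v. \<sigma> v = single (r v) 1"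
  shows "subst \<sigma> p = mono_subst r p"
  unfolding subst_def mono_subst_def
  by (rule sum.cong) (simp_all add: assms single_one_power prod_single_one Const_def mult_single
      exp_image_def)

lemma mono_subst_eq_0_imp_same_image:
  assumes "mono_subst r p = 0" "u0 \<in> keys p"
  obtains u1 where "u1 \<in> keys p" "u1 \<noteq> u0" "exp_image r u1 = exp_image r u0"
proof -
  have "\<exists>u1\<in>keys p. u1 \<noteq> u0 \<and> exp_image r u1 = exp_image r u0"
  proof (rule ccontr)
    assume "\<not> ?thesis"
    then have "lookup (mono_subst r p) (exp_image r u0) = (\<Sum>u\<in>keys p. if u = u0 then lookup p u else 0)"
      unfolding mono_subst_def lookup_sum by (intro sum.cong) (auto simp: lookup_single when_def)
    then show False
      using assms by (simp add: in_keys_iff)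
  qed
  then show ?thesis
    using that by blast
qed

text \<open>Induction on the number of terms: move the coefficient of one monomial of \<open>p\<close> onto
  another monomial of \<open>p\<close> with the same image.\<close>
lemma mono_subst_kernel_binomials:
  fixes p :: "('v \<Rightarrow>\<^sub>0 nat) \<Rightarrow>\<^sub>0 'k::comm_ring_1"
  assumes "mono_subst r p = 0"
  obtains n :: nat and c u u' where "p = (\<Sum>j<n. single (u j) (c j) - single (u' j) (c j))"
    and "\<And>j. j < n \<Longrightarrow> u j \<in> keys p \<and> u' j \<in> keys p \<and> exp_image r (u j) = exp_image r (u' j)"
  using assms
proof (induction "card (keys p)" arbitrary: p thesis rule: less_induct)
  case less
  show ?case
  proof (cases "p = 0")
    case True
    then show ?thesis by (intro less.prems(1)[where n=0]) auto
  next
    case False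
    then obtain u0 where u0: "u0 \<in> keys p"
      by (metis all_not_in_conv keys_eq_empty)
    define c where "c = lookup p u0"
    obtain u1 where u1: "u1 \<in> keys p" "u1 \<noteq> u0" "exp_image r u1 = exp_image r u0"
      using mono_subst_eq_0_imp_same_image[OF less.prems(2) u0] by blast
    define p' where "p' = p - single u0 c + single u1 c"
    have keys': "keys p' \<subseteq> keys p - {u0}"
      using u1 by (auto simp: p'_def c_def in_keys_iff lookup_add lookup_minus lookup_single
          when_def split: if_splits)
    then have card_less: "card (keys p') < card (keys p)"
      using u0 by (meson card_Diff1_less finite_keys card_mono finite_Diff order.strict_trans1)
    have kernel': "mono_subst r p' = 0"
      using less.prems(2) u1(3) by (simp add: p'_def mono_subst_add mono_subst_diff)
    obtain n :: nat and c' u u' where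
      p': "p' = (\<Sum>j<n. single (u j) (c' j) - single (u' j) (c' j))" and
      uu': "\<And>j. j < n \<Longrightarrow> u j \<in> keys p' \<and> u' j \<in> keys p' \<and> exp_image r (u j) = exp_image r (u' j)"
      using less.hyps[OF card_less _ kernel'] by blast
    define u0' c0 u1' where "u0' = u(n := u0)" and "c0 = c'(n := c)" and "u1' = u'(n := u1)"
    have "p = p' + (single u0 c - single u1 c)"
      by (simp add: p'_def)
    then have "p = (\<Sum>j<Suc n. single (u0' j) (c0 j) - single (u1' j) (c0 j))"
      by (simp add: p' u0'_def c0_def u1'_def)
    moreover have "u0' j \<in> keys p \<and> u1' j \<in> keys p \<and> exp_image r (u0' j) = exp_image r (u1' j)"
      if "j < Suc n" for j
    proof (cases "j = n")
      case True
      then show ?thesis using u0 u1 by (simp add: u0'_def u1'_def)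
    next
      case False
      then show ?thesis using that uu'[of j] keys' by (auto simp: u0'_def u1'_def)
    qed
    ultimately show ?thesis
      by (rule less.prems(1))
  qed
qed

definition rees_exp :: "nat \<Rightarrow> (nat \<Rightarrow> nat) \<Rightarrow> var \<Rightarrow> (var \<Rightarrow>\<^sub>0 nat)" where
  "rees_exp m b v = (case v of
      T i \<Rightarrow> single (T i) 1
    | X i \<Rightarrow> single (T i) (bsum m b) + single Z 1
    | W \<Rightarrow> (\<Sum>i=1..m. single (T i) (b i)) + single Z 1
    | Z \<Rightarrow> single Z 1)"

lemma single_sum_lessThan: "(\<Sum>j<n. single v (1::nat)) = single v n"
  by (induction n) (simp_all flip: single_add)

lemma rees_map_eq_single: "(rees_map m b v :: 'k::comm_ring_1 mpoly) = single (rees_exp m b v) 1"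
  by (cases v) (simp_all add: rees_map_def rees_exp_def Var_def single_one_power mult_single
      prod_single_one single_sum_lessThan[simplified])

lemma subst_rees_map: "subst (rees_map m b) p = mono_subst (rees_exp m b) p"
  by (rule subst_eq_mono_subst) (rule rees_map_eq_single)

lemma rees_ideal_iff:
  "p \<in> rees_ideal m b \<longleftrightarrow> in_S m p \<and> mono_subst (rees_exp m b) p = 0"
  by (simp add: rees_ideal_def subst_rees_map)

definition TXW_exp :: "nat \<Rightarrow> (nat \<Rightarrow> nat) \<Rightarrow> (nat \<Rightarrow> nat) \<Rightarrow> nat \<Rightarrow> (var \<Rightarrow>\<^sub>0 nat)" where
  "TXW_exp m \<alpha> \<beta> \<gamma> = (\<Sum>i=1..m. single (T i) (\<alpha> i) + single (X i) (\<beta> i)) + single W \<gamma>"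

lemma lookup_TXW_exp:
  "lookup (TXW_exp m \<alpha> \<beta> \<gamma>) (T j) = (if j \<in> {1..m} then \<alpha> j else 0)"
  "lookup (TXW_exp m \<alpha> \<beta> \<gamma>) (X j) = (if j \<in> {1..m} then \<beta> j else 0)"
  "lookup (TXW_exp m \<alpha> \<beta> \<gamma>) W = \<gamma>"
  "lookup (TXW_exp m \<alpha> \<beta> \<gamma>) Z = 0"
  by (auto simp: TXW_exp_def lookup_add lookup_sum lookup_single when_def)

lemma keys_TXW_exp: "keys (TXW_exp m \<alpha> \<beta> \<gamma>) \<subseteq> S_vars m"
proof
  fix v assume "v \<in> keys (TXW_exp m \<alpha> \<beta> \<gamma>)"
  then show "v \<in> S_vars m"
    by (cases v) (auto simp: in_keys_iff lookup_TXW_exp S_vars_def split: if_splits)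
qed

lemma TXW_exp_cong:
  assumes "\<And>i. i \<in> {1..m} \<Longrightarrow> \<alpha> i = \<alpha>' i" "\<And>i. i \<in> {1..m} \<Longrightarrow> \<beta> i = \<beta>' i" "\<gamma> = \<gamma>'"
  shows "TXW_exp m \<alpha> \<beta> \<gamma> = TXW_exp m \<alpha>' \<beta>' \<gamma>'"
  unfolding TXW_exp_def using assms by (auto intro!: sum.cong)

lemma TXW_exp_add:
  "TXW_exp m \<alpha> \<beta> \<gamma> + TXW_exp m \<alpha>' \<beta>' \<gamma>' = TXW_exp m (\<lambda>i. \<alpha> i + \<alpha>' i) (\<lambda>i. \<beta> i + \<beta>' i) (\<gamma> + \<gamma>')"
  unfolding TXW_exp_def by (simp add: single_add sum.distrib algebra_simps)

lemma TXW_exp_lookup: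
  assumes "keys u \<subseteq> S_vars m"
  shows "u = TXW_exp m (\<lambda>i. lookup u (T i)) (\<lambda>i. lookup u (X i)) (lookup u W)"
proof (rule poly_mapping_eqI)
  fix v
  have "v \<notin> S_vars m \<Longrightarrow> lookup u v = 0"
    using assms by (auto simp: in_keys_iff)
  then show "lookup u v = lookup (TXW_exp m (\<lambda>i. lookup u (T i)) (\<lambda>i. lookup u (X i)) (lookup u W)) v"
    by (cases v) (auto simp: lookup_TXW_exp S_vars_def)
qed

lemma xw_deg_eq_sum: "xw_deg u = (\<Sum>v\<in>keys u. if is_XW v then lookup u v else 0)"
  by (simp add: xw_deg_def sum.inter_filter)

lemma xw_deg_add: "xw_deg (u + u') = xw_deg u + xw_deg u'"
  unfolding xw_deg_eq_sum by (rule setsum_keys_plus_distrib) simp_all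

lemma xw_deg_TXW_exp: "xw_deg (TXW_exp m \<alpha> \<beta> \<gamma>) = (\<Sum>i=1..m. \<beta> i) + \<gamma>"
proof -
  have xw_deg_single: "xw_deg (single v n) = (if is_XW v then n else 0)" for v n
    by (simp add: xw_deg_eq_sum)
  have xw_deg_zero: "xw_deg 0 = 0"
    by (simp add: xw_deg_def)
  have xw_deg_sum: "xw_deg (\<Sum>a\<in>A. f a) = (\<Sum>a\<in>A. xw_deg (f a))" for A and f :: "nat \<Rightarrow> _"
    by (induction A rule: infinite_finite_induct) (simp_all add: xw_deg_add xw_deg_zero)
  show ?thesis
    by (simp add: TXW_exp_def xw_deg_add xw_deg_sum xw_deg_single is_XW_def)
qed

text \<open>The image of \<open>T^\<alpha> X^\<beta> W^\<gamma>\<close> is \<open>\<Prod>i. T_i^(\<alpha>_i + |b| \<beta>_i + \<gamma> b_i) \<cdot> Z^(\<Sum>\<beta> + \<gamma>)\<close>.\<close>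
definition same_fibre ::
  "nat \<Rightarrow> (nat \<Rightarrow> nat) \<Rightarrow> (nat \<Rightarrow> nat) \<Rightarrow> (nat \<Rightarrow> nat) \<Rightarrow> nat \<Rightarrow> (nat \<Rightarrow> nat) \<Rightarrow> (nat \<Rightarrow> nat) \<Rightarrow> nat \<Rightarrow> bool"
where
  "same_fibre m b \<alpha> \<beta> \<gamma> \<alpha>' \<beta>' \<gamma>' \<longleftrightarrow>
     (\<forall>i\<in>{1..m}. \<alpha> i + bsum m b * \<beta> i + \<gamma> * b i = \<alpha>' i + bsum m b * \<beta>' i + \<gamma>' * b i)
     \<and> (\<Sum>i=1..m. \<beta> i) + \<gamma> = (\<Sum>i=1..m. \<beta>' i) + \<gamma>'"

lemma lookup_exp_image_TXW_exp_expand: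
  "lookup (exp_image r (TXW_exp m \<alpha> \<beta> \<gamma>)) w
     = (\<Sum>i=1..m. \<alpha> i * lookup (r (T i)) w + \<beta> i * lookup (r (X i)) w) + \<gamma> * lookup (r W) w"
  by (simp add: TXW_exp_def exp_image_add exp_image_sum lookup_add lookup_sum lookup_exp_image_single)

lemma lookup_rees_exp:
  "lookup (rees_exp m b (T i)) w = (if w = T i then 1 else 0)"
  "lookup (rees_exp m b (X i)) w = (if w = T i then bsum m b else 0) + (if w = Z then 1 else 0)"
  "lookup (rees_exp m b W) w = (\<Sum>k=1..m. if w = T k then b k else 0) + (if w = Z then 1 else 0)"
  by (auto simp: rees_exp_def lookup_add lookup_sum lookup_single when_def intro!: sum.cong)

lemma lookup_exp_image_TXW_exp:
  "lookup (exp_image (rees_exp m b) (TXW_exp m \<alpha> \<beta> \<gamma>)) (T j)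
     = (if j \<in> {1..m} then \<alpha> j + bsum m b * \<beta> j + \<gamma> * b j else 0)"
  "lookup (exp_image (rees_exp m b) (TXW_exp m \<alpha> \<beta> \<gamma>)) Z = (\<Sum>i=1..m. \<beta> i) + \<gamma>"
  "lookup (exp_image (rees_exp m b) (TXW_exp m \<alpha> \<beta> \<gamma>)) (X j) = 0"
  "lookup (exp_image (rees_exp m b) (TXW_exp m \<alpha> \<beta> \<gamma>)) W = 0"
  by (simp_all add: lookup_exp_image_TXW_exp_expand lookup_rees_exp sum.distrib
      if_distrib[of "(*) x" for x] mult.commute[of _ "bsum m b"] mult.commute[of "b _"]
      sum.delta' cong: if_cong)

lemma exp_image_TXW_exp_eq_iff:
  "exp_image (rees_exp m b) (TXW_exp m \<alpha> \<beta> \<gamma>) = exp_image (rees_exp m b) (TXW_exp m \<alpha>' \<beta>' \<gamma>')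
     \<longleftrightarrow> same_fibre m b \<alpha> \<beta> \<gamma> \<alpha>' \<beta>' \<gamma>'"
proof
  assume eq: "exp_image (rees_exp m b) (TXW_exp m \<alpha> \<beta> \<gamma>) = exp_image (rees_exp m b) (TXW_exp m \<alpha>' \<beta>' \<gamma>')"
  show "same_fibre m b \<alpha> \<beta> \<gamma> \<alpha>' \<beta>' \<gamma>'"
    unfolding same_fibre_def
  proof (intro conjI ballI)
    fix i assume "i \<in> {1..m}"
    moreover have "lookup (exp_image (rees_exp m b) (TXW_exp m \<alpha> \<beta> \<gamma>)) (T i)
        = lookup (exp_image (rees_exp m b) (TXW_exp m \<alpha>' \<beta>' \<gamma>')) (T i)"
      using eq by simp
    ultimately show "\<alpha> i + bsum m b * \<beta> i + \<gamma> * b i = \<alpha>' i + bsum m b * \<beta>' i + \<gamma>' * b i"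
      by (simp add: lookup_exp_image_TXW_exp)
  next
    show "(\<Sum>i=1..m. \<beta> i) + \<gamma> = (\<Sum>i=1..m. \<beta>' i) + \<gamma>'"
      using arg_cong[OF eq, of "\<lambda>u. lookup u Z"] by (simp add: lookup_exp_image_TXW_exp)
  qed
next
  assume "same_fibre m b \<alpha> \<beta> \<gamma> \<alpha>' \<beta>' \<gamma>'"
  then have "lookup (exp_image (rees_exp m b) (TXW_exp m \<alpha> \<beta> \<gamma>)) w
      = lookup (exp_image (rees_exp m b) (TXW_exp m \<alpha>' \<beta>' \<gamma>')) w" for w
    by (cases w) (auto simp: same_fibre_def lookup_exp_image_TXW_exp)
  then show "exp_image (rees_exp m b) (TXW_exp m \<alpha> \<beta> \<gamma>) = exp_image (rees_exp m b) (TXW_exp m \<alpha>' \<beta>' \<gamma>')"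
    by (rule poly_mapping_eqI)
qed

lemma same_fibre_sym: "same_fibre m b \<alpha> \<beta> \<gamma> \<alpha>' \<beta>' \<gamma>' \<Longrightarrow> same_fibre m b \<alpha>' \<beta>' \<gamma>' \<alpha> \<beta> \<gamma>"
  unfolding same_fibre_def by auto

lemma same_fibre_trans:
  "same_fibre m b \<alpha> \<beta> \<gamma> \<alpha>' \<beta>' \<gamma>' \<Longrightarrow> same_fibre m b \<alpha>' \<beta>' \<gamma>' \<alpha>'' \<beta>'' \<gamma>''
    \<Longrightarrow> same_fibre m b \<alpha> \<beta> \<gamma> \<alpha>'' \<beta>'' \<gamma>''"
  unfolding same_fibre_def by auto

text \<open>Summing the \<open>T\<close>-exponents of the image gives \<open>\<Sum>\<alpha> + |b| (\<Sum>\<beta> + \<gamma>)\<close>.\<close>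
lemma same_fibre_sum_eq:
  assumes "same_fibre m b \<alpha> \<beta> \<gamma> \<alpha>' \<beta>' \<gamma>'"
  shows "(\<Sum>i=1..m. \<alpha> i) = (\<Sum>i=1..m. \<alpha>' i)"
proof -
  have total: "(\<Sum>i=1..m. \<alpha> i + bsum m b * \<beta> i + \<gamma> * b i)
      = (\<Sum>i=1..m. \<alpha> i) + bsum m b * ((\<Sum>i=1..m. \<beta> i) + \<gamma>)" for \<alpha> \<beta> \<gamma>
    by (simp add: sum.distrib bsum_def algebra_simps flip: sum_distrib_left sum_distrib_right)
  have "(\<Sum>i=1..m. \<alpha> i + bsum m b * \<beta> i + \<gamma> * b i) = (\<Sum>i=1..m. \<alpha>' i + bsum m b * \<beta>' i + \<gamma>' * b i)"
    using assms unfolding same_fibre_def by (intro sum.cong) auto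
  then show ?thesis
    using assms unfolding total same_fibre_def by simp
qed

lemma in_S_mult:
  assumes "in_S m p" "in_S m q"
  shows "in_S m (p * q)"
  unfolding in_S_def
proof
  fix u assume "u \<in> keys (p * q)"
  then obtain a c where "u = a + c" "a \<in> keys p" "c \<in> keys q"
    using keys_mult by blast
  with assms show "keys u \<subseteq> S_vars m"
    unfolding in_S_def using keys_add[of a c] by blast
qed

lemma in_S_single: "keys u \<subseteq> S_vars m \<Longrightarrow> in_S m (single u c)"
  by (simp add: in_S_def)

lemma S_idealI:
  fixes n :: nat
  assumes "x = (\<Sum>i<n. s i * g i)" "\<And>i. i < n \<Longrightarrow> in_S m (s i) \<and> g i \<in> G"
  shows "x \<in> S_ideal m G"
  unfolding S_ideal_def using assms by blast

lemma S_ideal_zero: "0 \<in> S_ideal m G"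
  by (rule S_idealI[where n=0]) simp_all

lemma S_ideal_gen: "g \<in> G \<Longrightarrow> in_S m s \<Longrightarrow> s * g \<in> S_ideal m G"
  by (rule S_idealI[where n=1 and s="\<lambda>_. s" and g="\<lambda>_. g"]) simp_all

lemma S_ideal_add:
  assumes "x \<in> S_ideal m G" "y \<in> S_ideal m G"
  shows "x + y \<in> S_ideal m G"
proof -
  obtain n1 :: nat and s1 g1 where x: "x = (\<Sum>i<n1. s1 i * g1 i)" "\<forall>i<n1. in_S m (s1 i) \<and> g1 i \<in> G"
    using assms(1) unfolding S_ideal_def by blast
  obtain n2 :: nat and s2 g2 where y: "y = (\<Sum>i<n2. s2 i * g2 i)" "\<forall>i<n2. in_S m (s2 i) \<and> g2 i \<in> G"
    using assms(2) unfolding S_ideal_def by blast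
  define s where "s i = (if i < n1 then s1 i else s2 (i - n1))" for i
  define g where "g i = (if i < n1 then g1 i else g2 (i - n1))" for i
  show ?thesis
  proof (rule S_idealI)
    show "x + y = (\<Sum>i<n1 + n2. s i * g i)"
      by (simp add: x y s_def g_def sum_lessThan_add)
    show "in_S m (s i) \<and> g i \<in> G" if "i < n1 + n2" for i
      using x(2) y(2) that by (auto simp: s_def g_def)
  qed
qed

lemma S_ideal_mult:
  assumes "x \<in> S_ideal m G" "in_S m t"
  shows "t * x \<in> S_ideal m G"
proof -
  obtain n :: nat and s g where x: "x = (\<Sum>i<n. s i * g i)" "\<forall>i<n. in_S m (s i) \<and> g i \<in> G"
    using assms(1) unfolding S_ideal_def by blast
  show ?thesis
  proof (rule S_idealI)
    show "t * x = (\<Sum>i<n. (t * s i) * g i)"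
      by (simp add: x sum_distrib_left mult.assoc)
    show "in_S m (t * s i) \<and> g i \<in> G" if "i < n" for i
      using x(2) assms(2) that by (auto intro: in_S_mult)
  qed
qed

lemma S_ideal_uminus: "x \<in> S_ideal m G \<Longrightarrow> - x \<in> S_ideal m G"
  using S_ideal_mult[of x m G "- 1"] by (simp add: in_S_def)

lemma S_ideal_sum: "(\<And>a. a \<in> A \<Longrightarrow> f a \<in> S_ideal m G) \<Longrightarrow> (\<Sum>a\<in>A. f a) \<in> S_ideal m G"
  by (induction A rule: infinite_finite_induct) (simp_all add: S_ideal_zero S_ideal_add)

lemma mono_subst_S_ideal_rees_ideal_1:
  assumes "x \<in> S_ideal m (rees_ideal_1 m b)"
  shows "mono_subst (rees_exp m b) x = 0"
proof -
  obtain n :: nat and s g where x: "x = (\<Sum>i<n. s i * g i)" "\<forall>i<n. in_S m (s i) \<and> g i \<in> rees_ideal_1 m b"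
    using assms unfolding S_ideal_def by blast
  then have "mono_subst (rees_exp m b) (g i) = 0" if "i < n" for i
    using that by (simp add: rees_ideal_1_def rees_ideal_iff)
  then show ?thesis
    by (simp add: x mono_subst_sum mono_subst_mult)
qed

definition L1_equiv :: "'k::comm_ring_1 itself \<Rightarrow> nat \<Rightarrow> (nat \<Rightarrow> nat) \<Rightarrow> (var \<Rightarrow>\<^sub>0 nat) \<Rightarrow> (var \<Rightarrow>\<^sub>0 nat) \<Rightarrow> bool"
where
  "L1_equiv K m b u u' \<longleftrightarrow> single u (1::'k) - single u' 1 \<in> S_ideal m (rees_ideal_1 m b)"

lemma L1_equiv_refl: "L1_equiv K m b u u"
  by (simp add: L1_equiv_def S_ideal_zero)

lemma L1_equiv_sym: "L1_equiv K m b u u' \<Longrightarrow> L1_equiv K m b u' u"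
  unfolding L1_equiv_def by (drule S_ideal_uminus) simp

lemma L1_equiv_trans [trans]: "L1_equiv K m b u u' \<Longrightarrow> L1_equiv K m b u' u'' \<Longrightarrow> L1_equiv K m b u u''"
  unfolding L1_equiv_def by (drule (1) S_ideal_add) simp

lemma L1_equiv_exp_image_eq:
  fixes K :: "'k::comm_ring_1 itself"
  assumes "L1_equiv K m b u u'"
  shows "exp_image (rees_exp m b) u = exp_image (rees_exp m b) u'"
proof -
  let ?a = "exp_image (rees_exp m b) u" and ?a' = "exp_image (rees_exp m b) u'"
  have "single ?a (1::'k) - single ?a' 1 = 0"
    using mono_subst_S_ideal_rees_ideal_1[OF assms[unfolded L1_equiv_def]]
    by (simp add: mono_subst_diff)
  then have "lookup (single ?a (1::'k) - single ?a' 1) ?a = 0"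
    by simp
  then show ?thesis
    by (auto simp: lookup_minus lookup_single when_def split: if_splits)
qed

lemma L1_equiv_same_fibre:
  "L1_equiv K m b (TXW_exp m \<alpha> \<beta> \<gamma>) (TXW_exp m \<alpha>' \<beta>' \<gamma>') \<Longrightarrow> same_fibre m b \<alpha> \<beta> \<gamma> \<alpha>' \<beta>' \<gamma>'"
  by (simp add: L1_equiv_exp_image_eq flip: exp_image_TXW_exp_eq_iff)

lemma L1_equiv_shift:
  fixes K :: "'k::comm_ring_1 itself"
  assumes "keys w \<subseteq> S_vars m" "keys p \<subseteq> S_vars m" "keys q \<subseteq> S_vars m"
    and "xw_deg p = 1" "xw_deg q = 1" "exp_image (rees_exp m b) p = exp_image (rees_exp m b) q"
  shows "L1_equiv K m b (w + p) (w + q)"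
proof -
  let ?g = "single p (1::'k) - single q 1"
  have keys: "keys ?g \<subseteq> {p, q}"
    by (auto simp: in_keys_iff lookup_minus lookup_single when_def split: if_splits)
  have "?g \<in> rees_ideal_1 m b"
    unfolding rees_ideal_1_def rees_ideal_iff
    using keys assms(2-6) by (auto simp: in_S_def mono_subst_diff)
  then have "single w 1 * ?g \<in> S_ideal m (rees_ideal_1 m b)"
    by (rule S_ideal_gen) (rule in_S_single[OF assms(1)])
  then show ?thesis
    by (simp add: L1_equiv_def right_diff_distrib mult_single)
qed

lemma sum_div_lower_bound:
  fixes x :: "'a \<Rightarrow> int"
  assumes "N > 0"
  shows "(\<Sum>k\<in>I. x k) - int (card I) * (N - 1) \<le> N * (\<Sum>k\<in>I. x k div N)"
proof -
  have "x k \<le> N * (x k div N) + (N - 1)" for k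
    using pos_mod_bound[OF assms, of "x k"] mult_div_mod_eq[of N "x k"] by linarith
  then have "(\<Sum>k\<in>I. x k) \<le> (\<Sum>k\<in>I. N * (x k div N) + (N - 1))"
    by (rule sum_mono)
  also have "\<dots> = N * (\<Sum>k\<in>I. x k div N) + int (card I) * (N - 1)"
    by (simp add: sum.distrib sum_distrib_left)
  finally show ?thesis
    by simp
qed

lemma exists_sum_between:
  fixes f g :: "'a \<Rightarrow> int"
  assumes "finite I" "\<And>k. k \<in> I \<Longrightarrow> f k \<le> g k" "sum f I \<le> s" "s \<le> sum g I"
  obtains h where "\<And>k. k \<in> I \<Longrightarrow> f k \<le> h k \<and> h k \<le> g k" "sum h I = s"
  using assms
proof (induction I arbitrary: s thesis rule: finite_induct)
  case empty
  then show ?case by auto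
next
  case (insert x F)
  define hx where "hx = max (f x) (s - sum g F)"
  have "sum f F \<le> sum g F"
    using insert.prems by (intro sum_mono) auto
  then have "sum f F \<le> s - hx" "s - hx \<le> sum g F"
    using insert.prems insert.hyps unfolding hx_def by auto
  then obtain h where h: "\<And>k. k \<in> F \<Longrightarrow> f k \<le> h k \<and> h k \<le> g k" "sum h F = s - hx"
    using insert.IH[of "s - hx"] insert.prems by blast
  have "hx \<le> g x"
    using insert.prems insert.hyps unfolding hx_def by auto
  moreover have "sum (h(x := hx)) F = sum h F"
    using insert.hyps by (intro sum.cong) auto
  ultimately show ?case
    using h insert.hyps by (intro insert.prems(1)[of "h(x := hx)"]) (auto simp: hx_def)
qed

text \<open>\<open>- ((\<alpha>\<^sub>k - b\<^sub>k) div N) = \<lceil>(b\<^sub>k - \<alpha>\<^sub>k) / N\<rceil>\<close> is the number of factors \<open>T\<^sub>k^N\<close> that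
  \<open>T\<^sub>k^(\<alpha>\<^sub>k)\<close> lacks to be divisible by \<open>T\<^sub>k^(b\<^sub>k)\<close>.\<close>
lemma sum_minus_div_le_one:
  fixes \<alpha> b :: "'a \<Rightarrow> nat" and N :: nat
  assumes I: "finite I" "I \<noteq> {}" and N: "0 < N" and sum_b: "(\<Sum>k\<in>I. b k) = N"
    and big: "(card I - 1) * (N - 1) \<le> (\<Sum>k\<in>I. \<alpha> k)"
  shows "(\<Sum>k\<in>I. - ((int (\<alpha> k) - int (b k)) div int N)) \<le> 1"
proof -
  define x where "x k = int (\<alpha> k) - int (b k)" for k
  have "1 \<le> card I"
    using I by (simp add: Suc_le_eq card_gt_0_iff)
  then have "int ((card I - 1) * (N - 1)) = (int (card I) - 1) * (int N - 1)"
    using N by (simp add: of_nat_diff)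
  moreover have "int ((card I - 1) * (N - 1)) \<le> int (\<Sum>k\<in>I. \<alpha> k)"
    using big by (simp only: of_nat_le_iff)
  moreover have "(\<Sum>k\<in>I. x k) = int (\<Sum>k\<in>I. \<alpha> k) - int N"
    using sum_b by (simp add: x_def sum_subtractf flip: of_nat_sum)
  ultimately have "int N * (- 2) < int N * (\<Sum>k\<in>I. x k div int N)"
    using sum_div_lower_bound[of "int N" x I] N by (simp add: algebra_simps)
  then have "- 2 < (\<Sum>k\<in>I. x k div int N)"
    using N by (simp only: mult_less_cancel_left_pos of_nat_0_less_iff)
  then show ?thesis
    by (simp add: x_def sum_negf)
qed

lemma minus_div_le_of_le:
  fixes a c \<beta> N :: nat
  assumes "0 < N" "c \<le> a + N * \<beta>"
  shows "- ((int a - int c) div int N) \<le> int \<beta>"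
proof -
  have "int c \<le> int (a + N * \<beta>)"
    using assms(2) by (simp only: of_nat_le_iff)
  then have "int N * (- int \<beta>) div int N \<le> (int a - int c) div int N"
    using assms(1) by (intro zdiv_mono1) (simp_all add: algebra_simps)
  moreover have "int N * (- int \<beta>) div int N = - int \<beta>"
    using assms(1) by (intro nonzero_mult_div_cancel_left) simp
  ultimately show ?thesis
    by simp
qed

lemma exists_X_shift:
  fixes \<alpha> \<beta> b :: "'a \<Rightarrow> nat" and N :: nat
  assumes I: "finite I" and N: "0 < N" and sum_b: "(\<Sum>k\<in>I. b k) = N"
    and reach: "\<And>k. k \<in> I \<Longrightarrow> b k \<le> \<alpha> k + N * \<beta> k"
    and sum_\<beta>: "1 \<le> (\<Sum>k\<in>I. \<beta> k)"
    and big: "(card I - 1) * (N - 1) \<le> (\<Sum>k\<in>I. \<alpha> k)"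
  obtains i \<delta> where "i \<in> I" "1 \<le> \<delta> i" "(\<Sum>k\<in>I. \<delta> k) = 1"
    and "\<And>k. k \<in> I \<Longrightarrow> int (b k) - int (\<alpha> k) \<le> int N * \<delta> k \<and> \<delta> k \<le> int (\<beta> k)"
proof -
  define r where "r k = - ((int (\<alpha> k) - int (b k)) div int N)" for k
  have r_le: "r k \<le> int (\<beta> k)" if "k \<in> I" for k
    unfolding r_def using N reach[OF that] by (rule minus_div_le_of_le)
  have "(\<Sum>k\<in>I. r k) \<le> 1"
    unfolding r_def using sum_\<beta> by (intro sum_minus_div_le_one[OF I _ N sum_b big]) auto
  moreover have "1 \<le> (\<Sum>k\<in>I. int (\<beta> k))"
    using sum_\<beta> by (simp flip: of_nat_sum)
  ultimately obtain \<delta> where \<delta>: "\<And>k. k \<in> I \<Longrightarrow> r k \<le> \<delta> k \<and> \<delta> k \<le> int (\<beta> k)"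
    and sum_\<delta>: "(\<Sum>k\<in>I. \<delta> k) = 1"
    using exists_sum_between[of I r "\<lambda>k. int (\<beta> k)" 1] I r_le by blast
  have "\<exists>i\<in>I. 1 \<le> \<delta> i"
  proof (rule ccontr)
    assume "\<not> ?thesis"
    then have "(\<Sum>k\<in>I. \<delta> k) \<le> 0"
      by (intro sum_nonpos) auto
    with sum_\<delta> show False
      by simp
  qed
  then obtain i where "i \<in> I" "1 \<le> \<delta> i"
    by blast
  moreover have "int (b k) - int (\<alpha> k) \<le> int N * \<delta> k" if "k \<in> I" for k
  proof -
    let ?x = "int (\<alpha> k) - int (b k)"
    have "int N * (?x div int N) \<le> ?x"
      using N pos_mod_sign[of "int N" ?x] mult_div_mod_eq[of "int N" ?x] by linarith
    then have "int (b k) - int (\<alpha> k) \<le> int N * r k"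
      by (simp add: r_def)
    also have "\<dots> \<le> int N * \<delta> k"
      using \<delta>[OF that] by (intro mult_left_mono) simp_all
    finally show ?thesis .
  qed
  ultimately show ?thesis
    using that sum_\<delta> \<delta> by blast
qed

lemma redistribute_X_exponents:
  fixes \<alpha> \<beta> b :: "'a \<Rightarrow> nat" and N :: nat
  assumes I: "finite I" and N: "0 < N" and sum_b: "(\<Sum>k\<in>I. b k) = N"
    and reach: "\<And>k. k \<in> I \<Longrightarrow> b k \<le> \<alpha> k + N * \<beta> k"
    and sum_\<beta>: "1 \<le> (\<Sum>k\<in>I. \<beta> k)"
    and big: "(card I - 1) * (N - 1) \<le> (\<Sum>k\<in>I. \<alpha> k)"
  obtains i \<alpha>' \<beta>' where "i \<in> I" "\<And>k. k \<in> I \<Longrightarrow> k \<noteq> i \<Longrightarrow> b k \<le> \<alpha>' k" "1 \<le> \<beta>' i"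
    and "\<And>k. k \<in> I \<Longrightarrow> \<alpha>' k + N * \<beta>' k = \<alpha> k + N * \<beta> k"
    and "(\<Sum>k\<in>I. \<beta>' k) = (\<Sum>k\<in>I. \<beta> k)"
proof -
  obtain i \<delta> where i: "i \<in> I" "1 \<le> \<delta> i" and sum_\<delta>: "(\<Sum>k\<in>I. \<delta> k) = 1"
    and \<delta>: "\<And>k. k \<in> I \<Longrightarrow> int (b k) - int (\<alpha> k) \<le> int N * \<delta> k \<and> \<delta> k \<le> int (\<beta> k)"
    by (rule exists_X_shift[OF I N sum_b reach sum_\<beta> big]) (assumption, rule that)
  \<comment> \<open>Trade \<open>\<delta>\<^sub>k\<close> factors \<open>X\<^sub>k\<close> for \<open>T\<^sub>k^N\<close>, and one \<open>T\<^sub>i^N\<close> back for \<open>X\<^sub>i\<close>.\<close>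
  define \<alpha>' where "\<alpha>' k = nat (int (\<alpha> k) + int N * \<delta> k - (if k = i then int N else 0))" for k
  define \<beta>' where "\<beta>' k = nat (int (\<beta> k) - \<delta> k + (if k = i then 1 else 0))" for k
  have \<alpha>': "int (\<alpha>' k) = int (\<alpha> k) + int N * \<delta> k - (if k = i then int N else 0)" if "k \<in> I" for k
  proof -
    have "int N \<le> int N * \<delta> i"
      using i(2) by (simp add: mult_le_cancel_left1)
    then show ?thesis
      using \<delta>[OF that] by (auto simp: \<alpha>'_def)
  qed
  have \<beta>': "int (\<beta>' k) = int (\<beta> k) - \<delta> k + (if k = i then 1 else 0)" if "k \<in> I" for k
    using \<delta>[OF that] by (auto simp: \<beta>'_def)
  show ?thesis
  proof (rule that[of i \<alpha>' \<beta>'])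
    show "i \<in> I" by (fact i(1))
    show "1 \<le> \<beta>' i"
      using \<beta>'[OF i(1)] \<delta>[OF i(1)] by simp
    show "b k \<le> \<alpha>' k" if "k \<in> I" "k \<noteq> i" for k
      using \<alpha>'[OF that(1)] \<delta>[OF that(1)] that(2) by simp
    show "\<alpha>' k + N * \<beta>' k = \<alpha> k + N * \<beta> k" if "k \<in> I" for k
    proof -
      have "int (\<alpha>' k + N * \<beta>' k) = int (\<alpha> k + N * \<beta> k)"
        unfolding of_nat_add of_nat_mult \<alpha>'[OF that] \<beta>'[OF that] by (simp add: algebra_simps)
      then show ?thesis
        by (simp only: of_nat_eq_iff)
    qed
    have "int (\<Sum>k\<in>I. \<beta>' k) = (\<Sum>k\<in>I. int (\<beta> k) - \<delta> k + (if k = i then 1 else 0))"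
      using \<beta>' by simp
    also have "\<dots> = int (\<Sum>k\<in>I. \<beta> k)"
      using i(1) I sum_\<delta> by (simp add: sum.distrib sum_subtractf)
    finally show "(\<Sum>k\<in>I. \<beta>' k) = (\<Sum>k\<in>I. \<beta> k)"
      by (simp only: of_nat_eq_iff)
  qed
qed

lemma sum_fun_upd_zero: "i \<in> {1..m::nat} \<Longrightarrow> (\<Sum>k=1..m. ((\<lambda>_. 0::nat)(i := c)) k) = c"
  unfolding fun_upd_def by (subst sum.delta) auto

lemma b_le_bsum: "i \<in> {1..m} \<Longrightarrow> b i \<le> bsum m b"
  unfolding bsum_def by (rule member_le_sum) auto

text \<open>The element \<open>X\<^sub>i T\<^sub>j^|b| - X\<^sub>j T\<^sub>i^|b|\<close> of \<open>L\<^sub>1\<close> moves one \<open>X\<close> from index \<open>i\<close> to index \<open>j\<close>.\<close>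
lemma L1_equiv_exchange_X:
  fixes K :: "'k::comm_ring_1 itself"
  assumes ij: "i \<in> {1..m}" "j \<in> {1..m}" "i \<noteq> j" and "1 \<le> \<beta> i" "bsum m b \<le> \<alpha> j"
  shows "L1_equiv K m b (TXW_exp m \<alpha> \<beta> \<gamma>)
     (TXW_exp m (\<alpha>(i := \<alpha> i + bsum m b, j := \<alpha> j - bsum m b)) (\<beta>(i := \<beta> i - 1, j := \<beta> j + 1)) \<gamma>)"
proof -
  define w where "w = TXW_exp m (\<alpha>(j := \<alpha> j - bsum m b)) (\<beta>(i := \<beta> i - 1)) \<gamma>"
  define p where "p = TXW_exp m ((\<lambda>_. 0)(j := bsum m b)) ((\<lambda>_. 0)(i := 1)) 0"
  define q where "q = TXW_exp m ((\<lambda>_. 0)(i := bsum m b)) ((\<lambda>_. 0)(j := 1)) 0"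
  have "L1_equiv K m b (w + p) (w + q)"
  proof (rule L1_equiv_shift)
    show "keys w \<subseteq> S_vars m" "keys p \<subseteq> S_vars m" "keys q \<subseteq> S_vars m"
      unfolding w_def p_def q_def by (rule keys_TXW_exp)+
    show "xw_deg p = 1" "xw_deg q = 1"
      unfolding p_def q_def xw_deg_TXW_exp using ij by (simp_all add: sum_fun_upd_zero)
    show "exp_image (rees_exp m b) p = exp_image (rees_exp m b) q"
      unfolding p_def q_def exp_image_TXW_exp_eq_iff same_fibre_def
      using ij by (auto simp: sum_fun_upd_zero)
  qed
  moreover have "w + p = TXW_exp m \<alpha> \<beta> \<gamma>"
    unfolding w_def p_def TXW_exp_add by (rule TXW_exp_cong) (use assms in auto)
  moreover have "w + q = TXW_exp m (\<alpha>(i := \<alpha> i + bsum m b, j := \<alpha> j - bsum m b))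
      (\<beta>(i := \<beta> i - 1, j := \<beta> j + 1)) \<gamma>"
    unfolding w_def q_def TXW_exp_add by (rule TXW_exp_cong) (use assms in auto)
  ultimately show ?thesis
    by simp
qed

text \<open>The element \<open>X\<^sub>i \<Prod>\<^sub>k\<^sub>\<noteq>\<^sub>i T\<^sub>k^(b\<^sub>k) - W T\<^sub>i^(|b|-b\<^sub>i)\<close> of \<open>L\<^sub>1\<close> turns one \<open>X\<^sub>i\<close> into \<open>W\<close>.\<close>
lemma L1_equiv_exchange_X_W:
  fixes K :: "'k::comm_ring_1 itself"
  assumes i: "i \<in> {1..m}" and "1 \<le> \<beta> i" and "\<And>k. k \<in> {1..m} \<Longrightarrow> k \<noteq> i \<Longrightarrow> b k \<le> \<alpha> k"
  shows "L1_equiv K m b (TXW_exp m \<alpha> \<beta> \<gamma>)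
     (TXW_exp m (\<lambda>k. if k = i then \<alpha> i + (bsum m b - b i) else \<alpha> k - b k) (\<beta>(i := \<beta> i - 1)) (\<gamma> + 1))"
proof -
  define w where "w = TXW_exp m (\<lambda>k. if k = i then \<alpha> i else \<alpha> k - b k) (\<beta>(i := \<beta> i - 1)) \<gamma>"
  define p where "p = TXW_exp m (\<lambda>k. if k = i then 0 else b k) ((\<lambda>_. 0)(i := 1)) 0"
  define q where "q = TXW_exp m ((\<lambda>_. 0)(i := bsum m b - b i)) (\<lambda>_. 0) 1"
  have "L1_equiv K m b (w + p) (w + q)"
  proof (rule L1_equiv_shift)
    show "keys w \<subseteq> S_vars m" "keys p \<subseteq> S_vars m" "keys q \<subseteq> S_vars m"
      unfolding w_def p_def q_def by (rule keys_TXW_exp)+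
    show "xw_deg p = 1" "xw_deg q = 1"
      unfolding p_def q_def xw_deg_TXW_exp using i by (simp_all add: sum_fun_upd_zero)
    show "exp_image (rees_exp m b) p = exp_image (rees_exp m b) q"
      unfolding p_def q_def exp_image_TXW_exp_eq_iff same_fibre_def
      using i b_le_bsum[OF i, of b] by (auto simp: sum_fun_upd_zero)
  qed
  moreover have "w + p = TXW_exp m \<alpha> \<beta> \<gamma>"
    unfolding w_def p_def TXW_exp_add by (rule TXW_exp_cong) (use assms in auto)
  moreover have "w + q = TXW_exp m (\<lambda>k. if k = i then \<alpha> i + (bsum m b - b i) else \<alpha> k - b k)
      (\<beta>(i := \<beta> i - 1)) (\<gamma> + 1)"
    unfolding w_def q_def TXW_exp_add by (rule TXW_exp_cong) (use assms in auto)
  ultimately show ?thesis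
    by simp
qed

lemma exists_greater_and_less_of_sum_eq:
  fixes f g :: "'a \<Rightarrow> 'b::{ordered_cancel_comm_monoid_add, linorder}"
  assumes "finite A" "sum f A = sum g A" "k \<in> A" "f k \<noteq> g k"
  obtains i j where "i \<in> A" "g i < f i" "j \<in> A" "f j < g j"
proof -
  have "\<exists>i\<in>A. g' i < f' i" if "sum f' A = sum g' A" "\<exists>k\<in>A. f' k < g' k" for f' g' :: "'a \<Rightarrow> 'b"
  proof (rule ccontr)
    assume "\<not> (\<exists>i\<in>A. g' i < f' i)"
    then have "sum f' A < sum g' A"
      using that(2) assms(1) by (intro sum_strict_mono_ex1) (auto simp: not_less)
    then show False
      using that(1) by simp
  qed
  then show ?thesis
    using assms(2-4) that by (metis linorder_neq_iff)
qed

lemma L1_equiv_same_level: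
  fixes K :: "'k::comm_ring_1 itself"
  shows "same_fibre m b \<alpha> \<beta> \<gamma> \<alpha>' \<beta>' \<gamma> \<Longrightarrow> L1_equiv K m b (TXW_exp m \<alpha> \<beta> \<gamma>) (TXW_exp m \<alpha>' \<beta>' \<gamma>)"
proof (induction "\<Sum>k=1..m. (\<beta> k - \<beta>' k) + (\<beta>' k - \<beta> k)" arbitrary: \<alpha> \<beta> rule: less_induct)
  case less
  let ?n = "bsum m b"
  have fT: "\<And>k. k \<in> {1..m} \<Longrightarrow> \<alpha> k + ?n * \<beta> k = \<alpha>' k + ?n * \<beta>' k"
    using less.prems unfolding same_fibre_def by auto
  show ?case
  proof (cases "\<forall>k\<in>{1..m}. \<beta> k = \<beta>' k")
    case True
    then have "TXW_exp m \<alpha> \<beta> \<gamma> = TXW_exp m \<alpha>' \<beta>' \<gamma>"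
      using fT by (intro TXW_exp_cong) auto
    then show ?thesis
      by (simp add: L1_equiv_refl)
  next
    case False
    then obtain k where k: "k \<in> {1..m}" "\<beta> k \<noteq> \<beta>' k"
      by blast
    have "sum \<beta> {1..m} = sum \<beta>' {1..m}"
      using less.prems unfolding same_fibre_def by simp
    then obtain i j where i: "i \<in> {1..m}" "\<beta>' i < \<beta> i" and j: "j \<in> {1..m}" "\<beta> j < \<beta>' j"
      by (rule exists_greater_and_less_of_sum_eq[where f=\<beta> and g=\<beta>', OF finite_atLeastAtMost _ k])
    have ij: "i \<noteq> j"
      using i j by auto
    have "?n * \<beta> j + ?n \<le> ?n * \<beta>' j"
      using j(2) by (metis Suc_le_eq mult_Suc_right mult_le_mono2 add.commute)
    then have aj: "?n \<le> \<alpha> j"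
      using fT[OF j(1)] by linarith
    define \<alpha>1 where "\<alpha>1 = \<alpha>(i := \<alpha> i + ?n, j := \<alpha> j - ?n)"
    define \<beta>1 where "\<beta>1 = \<beta>(i := \<beta> i - 1, j := \<beta> j + 1)"
    have step: "L1_equiv K m b (TXW_exp m \<alpha> \<beta> \<gamma>) (TXW_exp m \<alpha>1 \<beta>1 \<gamma>)"
      unfolding \<alpha>1_def \<beta>1_def using i j ij aj by (intro L1_equiv_exchange_X) auto
    have "same_fibre m b \<alpha>1 \<beta>1 \<gamma> \<alpha>' \<beta>' \<gamma>"
      using same_fibre_trans[OF same_fibre_sym[OF L1_equiv_same_fibre[OF step]] less.prems] .
    moreover have "(\<Sum>k=1..m. (\<beta>1 k - \<beta>' k) + (\<beta>' k - \<beta>1 k)) < (\<Sum>k=1..m. (\<beta> k - \<beta>' k) + (\<beta>' k - \<beta> k))"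
      by (rule sum_strict_mono_ex1) (use i j ij in \<open>auto simp: \<beta>1_def\<close>)
    ultimately show ?thesis
      using less.hyps step L1_equiv_trans by blast
  qed
qed

lemma L1_equiv_level_up:
  fixes K :: "'k::comm_ring_1 itself"
  assumes fibre: "same_fibre m b \<alpha> \<beta> \<gamma> \<alpha>' \<beta>' \<gamma>'" and "\<gamma> < \<gamma>'" and "0 < bsum m b"
    and big: "(m - 1) * (bsum m b - 1) \<le> (\<Sum>i=1..m. \<alpha> i)"
  obtains \<alpha>2 \<beta>2 where "L1_equiv K m b (TXW_exp m \<alpha> \<beta> \<gamma>) (TXW_exp m \<alpha>2 \<beta>2 (\<gamma> + 1))"
proof -
  let ?n = "bsum m b"
  have reach: "b k \<le> \<alpha> k + ?n * \<beta> k" if "k \<in> {1..m}" for k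
  proof -
    have "(\<gamma> + 1) * b k \<le> \<gamma>' * b k"
      using \<open>\<gamma> < \<gamma>'\<close> by (intro mult_le_mono1) simp
    moreover have "\<alpha> k + ?n * \<beta> k + \<gamma> * b k = \<alpha>' k + ?n * \<beta>' k + \<gamma>' * b k"
      using fibre that unfolding same_fibre_def by blast
    ultimately show ?thesis
      by (simp add: algebra_simps)
  qed
  have sum_\<beta>: "1 \<le> (\<Sum>k=1..m. \<beta> k)"
    using fibre \<open>\<gamma> < \<gamma>'\<close> unfolding same_fibre_def by linarith
  have sum_b: "(\<Sum>k=1..m. b k) = ?n"
    by (simp add: bsum_def)
  have big': "(card {1..m} - 1) * (?n - 1) \<le> (\<Sum>k=1..m. \<alpha> k)"
    using big by simp
  obtain i \<alpha>1 \<beta>1 where i: "i \<in> {1..m}"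
    and \<alpha>1: "\<And>k. k \<in> {1..m} \<Longrightarrow> k \<noteq> i \<Longrightarrow> b k \<le> \<alpha>1 k" and \<beta>1: "1 \<le> \<beta>1 i"
    and same_T: "\<And>k. k \<in> {1..m} \<Longrightarrow> \<alpha>1 k + ?n * \<beta>1 k = \<alpha> k + ?n * \<beta> k"
    and same_X: "(\<Sum>k=1..m. \<beta>1 k) = (\<Sum>k=1..m. \<beta> k)"
    by (rule redistribute_X_exponents[OF finite_atLeastAtMost \<open>0 < ?n\<close> sum_b reach sum_\<beta> big'])
      (assumption, rule that)
  have "L1_equiv K m b (TXW_exp m \<alpha> \<beta> \<gamma>) (TXW_exp m \<alpha>1 \<beta>1 \<gamma>)"
    using same_T same_X by (intro L1_equiv_same_level) (auto simp: same_fibre_def)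
  also have "L1_equiv K m b (TXW_exp m \<alpha>1 \<beta>1 \<gamma>) (TXW_exp m
      (\<lambda>k. if k = i then \<alpha>1 i + (?n - b i) else \<alpha>1 k - b k) (\<beta>1(i := \<beta>1 i - 1)) (\<gamma> + 1))"
    using i \<beta>1 \<alpha>1 by (rule L1_equiv_exchange_X_W)
  finally show ?thesis
    by (rule that)
qed

lemma L1_equiv_of_same_fibre_upwards:
  fixes K :: "'k::comm_ring_1 itself"
  assumes n: "0 < bsum m b"
  shows "\<gamma> \<le> \<gamma>' \<Longrightarrow> same_fibre m b \<alpha> \<beta> \<gamma> \<alpha>' \<beta>' \<gamma>' \<Longrightarrow> (m - 1) * (bsum m b - 1) \<le> (\<Sum>i=1..m. \<alpha> i)
    \<Longrightarrow> L1_equiv K m b (TXW_exp m \<alpha> \<beta> \<gamma>) (TXW_exp m \<alpha>' \<beta>' \<gamma>')"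
proof (induction "\<gamma>' - \<gamma>" arbitrary: \<alpha> \<beta> \<gamma> rule: less_induct)
  case less
  show ?case
  proof (cases "\<gamma> = \<gamma>'")
    case True
    then show ?thesis
      using L1_equiv_same_level less.prems(2) by blast
  next
    case False
    then have "\<gamma> < \<gamma>'"
      using less.prems(1) by simp
    then obtain \<alpha>2 \<beta>2 where step: "L1_equiv K m b (TXW_exp m \<alpha> \<beta> \<gamma>) (TXW_exp m \<alpha>2 \<beta>2 (\<gamma> + 1))"
      using L1_equiv_level_up[OF less.prems(2) _ n less.prems(3)] by blast
    have fibre2: "same_fibre m b \<alpha>2 \<beta>2 (\<gamma> + 1) \<alpha>' \<beta>' \<gamma>'"
      using same_fibre_trans[OF same_fibre_sym[OF L1_equiv_same_fibre[OF step]] less.prems(2)] .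
    have "(\<Sum>i=1..m. \<alpha>2 i) = (\<Sum>i=1..m. \<alpha> i)"
      using same_fibre_sum_eq[OF L1_equiv_same_fibre[OF step]] by simp
    then have "L1_equiv K m b (TXW_exp m \<alpha>2 \<beta>2 (\<gamma> + 1)) (TXW_exp m \<alpha>' \<beta>' \<gamma>')"
      using less.hyps[of "\<gamma> + 1" \<alpha>2 \<beta>2] fibre2 \<open>\<gamma> < \<gamma>'\<close> less.prems(3) by simp
    with step show ?thesis
      by (rule L1_equiv_trans)
  qed
qed

lemma L1_equiv_of_same_fibre:
  fixes K :: "'k::comm_ring_1 itself"
  assumes n: "0 < bsum m b" and fibre: "same_fibre m b \<alpha> \<beta> \<gamma> \<alpha>' \<beta>' \<gamma>'"
    and big: "(m - 1) * (bsum m b - 1) \<le> (\<Sum>i=1..m. \<alpha> i)"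
  shows "L1_equiv K m b (TXW_exp m \<alpha> \<beta> \<gamma>) (TXW_exp m \<alpha>' \<beta>' \<gamma>')"
proof (cases "\<gamma> \<le> \<gamma>'")
  case True
  then show ?thesis
    using L1_equiv_of_same_fibre_upwards[OF n] fibre big by blast
next
  case False
  have "(\<Sum>i=1..m. \<alpha>' i) = (\<Sum>i=1..m. \<alpha> i)"
    using same_fibre_sum_eq[OF fibre] by simp
  then have "L1_equiv K m b (TXW_exp m \<alpha>' \<beta>' \<gamma>') (TXW_exp m \<alpha> \<beta> \<gamma>)"
    using False big by (intro L1_equiv_of_same_fibre_upwards[OF n _ same_fibre_sym[OF fibre]]) simp_all
  then show ?thesis
    by (rule L1_equiv_sym)
qed

lemma L1_equiv_of_same_image:
  fixes K :: "'k::comm_ring_1 itself"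
  assumes "0 < bsum m b" and u: "keys u \<subseteq> S_vars m" and v: "keys v \<subseteq> S_vars m"
    and "exp_image (rees_exp m b) u = exp_image (rees_exp m b) v"
    and "(m - 1) * (bsum m b - 1) \<le> (\<Sum>i=1..m. lookup u (T i))"
  shows "L1_equiv K m b u v"
proof -
  have "L1_equiv K m b (TXW_exp m (\<lambda>i. lookup u (T i)) (\<lambda>i. lookup u (X i)) (lookup u W))
      (TXW_exp m (\<lambda>i. lookup v (T i)) (\<lambda>i. lookup v (X i)) (lookup v W))"
    using assms(4) by (intro L1_equiv_of_same_fibre[OF assms(1) _ assms(5)])
      (simp only: flip: exp_image_TXW_exp_eq_iff TXW_exp_lookup[OF u] TXW_exp_lookup[OF v])
  then show ?thesis
    by (simp only: flip: TXW_exp_lookup[OF u] TXW_exp_lookup[OF v])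
qed

lemma T_prod_power: "(T_prod m :: 'k::comm_ring_1 mpoly) ^ k = single (TXW_exp m (\<lambda>_. k) (\<lambda>_. 0) 0) 1"
proof (induction k)
  case 0
  then show ?case
    by (simp add: TXW_exp_def)
next
  case (Suc k)
  have T_prod: "T_prod m = single (TXW_exp m (\<lambda>_. 1) (\<lambda>_. 0) 0) (1::'k)"
    by (simp add: T_prod_def Var_def prod_single_one TXW_exp_def)
  show ?case
    by (simp only: power_Suc Suc.IH) (simp add: T_prod mult_single TXW_exp_add)
qed

lemma colon_subset_rees_ideal:
  assumes "h \<in> S_colon m (S_ideal m (rees_ideal_1 m b)) ((T_prod m :: 'k::comm_ring_1 mpoly) ^ k)"
  shows "h \<in> rees_ideal m b"
proof -
  have "mono_subst (rees_exp m b) (T_prod m ^ k * h) = 0"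
    using assms by (simp add: S_colon_def mono_subst_S_ideal_rees_ideal_1)
  then have "single (exp_image (rees_exp m b) (TXW_exp m (\<lambda>_. k) (\<lambda>_. 0) 0)) (1::'k)
      * mono_subst (rees_exp m b) h = 0"
    by (simp add: mono_subst_mult T_prod_power)
  then show ?thesis
    using assms by (simp add: rees_ideal_iff S_colon_def single_one_mult_eq_0_iff)
qed

text \<open>Every binomial of \<open>L\<close> becomes \<open>L\<^sub>1\<close>-equivalent after multiplication by \<open>(T\<^sub>1\<cdots>T\<^sub>m)^k\<close>,
  since this raises the total \<open>T\<close>-degree to at least \<open>m k\<close>.\<close>
lemma rees_ideal_subset_colon:
  assumes n: "0 < bsum m b" and big: "(m - 1) * (bsum m b - 1) \<le> m * k"
  shows "rees_ideal m b \<subseteq> S_colon m (S_ideal m (rees_ideal_1 m b)) ((T_prod m :: 'k::comm_ring_1 mpoly) ^ k)"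
proof
  fix p :: "'k mpoly"
  assume "p \<in> rees_ideal m b"
  then have p: "in_S m p" "mono_subst (rees_exp m b) p = 0"
    by (simp_all add: rees_ideal_iff)
  from p(2) obtain n :: nat and c u u' where decomp: "p = (\<Sum>j<n. single (u j) (c j) - single (u' j) (c j))"
    and uu': "\<And>j. j < n \<Longrightarrow> u j \<in> keys p \<and> u' j \<in> keys p \<and>
        exp_image (rees_exp m b) (u j) = exp_image (rees_exp m b) (u' j)"
    by (rule mono_subst_kernel_binomials) (rule that)
  let ?E = "TXW_exp m (\<lambda>_. k) (\<lambda>_. 0) 0"
  have binomial: "single ?E 1 * (single (u j) (c j) - single (u' j) (c j))
      \<in> S_ideal m (rees_ideal_1 m b)" if "j < n" for j
  proof -
    have S: "keys (u j) \<subseteq> S_vars m" "keys (u' j) \<subseteq> S_vars m"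
      using p(1) uu'[OF that] by (auto simp: in_S_def)
    have "L1_equiv TYPE('k) m b (u j + ?E) (u' j + ?E)"
    proof (rule L1_equiv_of_same_image[OF n])
      show "keys (u j + ?E) \<subseteq> S_vars m" "keys (u' j + ?E) \<subseteq> S_vars m"
        using S keys_TXW_exp[of m "\<lambda>_. k" "\<lambda>_. 0" 0] keys_add[of "u j" ?E] keys_add[of "u' j" ?E]
        by blast+
      show "exp_image (rees_exp m b) (u j + ?E) = exp_image (rees_exp m b) (u' j + ?E)"
        using uu'[OF that] by (simp add: exp_image_add)
      show "(m - 1) * (bsum m b - 1) \<le> (\<Sum>i=1..m. lookup (u j + ?E) (T i))"
        using big by (simp add: lookup_add lookup_TXW_exp sum.distrib)
    qed
    then have "single 0 (c j) * (single (u j + ?E) 1 - single (u' j + ?E) 1)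
        \<in> S_ideal m (rees_ideal_1 m b)"
      unfolding L1_equiv_def by (rule S_ideal_mult) (simp add: in_S_single)
    then show ?thesis
      by (simp add: mult_single right_diff_distrib add.commute)
  qed
  have "single ?E 1 * p \<in> S_ideal m (rees_ideal_1 m b)"
    unfolding decomp sum_distrib_left using binomial by (intro S_ideal_sum) simp
  then show "p \<in> S_colon m (S_ideal m (rees_ideal_1 m b)) (T_prod m ^ k)"
    using p by (simp add: S_colon_def T_prod_power)
qed

lemma colon_eq_rees_ideal:
  assumes "0 < bsum m b" "(m - 1) * (bsum m b - 1) \<le> m * k"
  shows "S_colon m (S_ideal m (rees_ideal_1 m b)) ((T_prod m :: 'k::comm_ring_1 mpoly) ^ k) = rees_ideal m b"
  using colon_subset_rees_ideal rees_ideal_subset_colon[OF assms] by blast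

theorem corollary4p2:
  fixes m :: nat and b :: "nat \<Rightarrow> nat" and l :: int
  assumes "m \<ge> 3"
    and "card {i \<in> {1..m}. b i \<noteq> 0} \<ge> 2"
    and "real_of_int l \<ge> (real (m - 1) * (real (bsum m b) - 1)) / real m"
  shows "S_colon m (S_ideal m (rees_ideal_1 m b)) ((T_prod m :: 'k::field mpoly) ^ nat l)
           = rees_ideal m b
       \<and> S_colon m (S_ideal m (rees_ideal_1 m b)) ((T_prod m :: 'k::field mpoly) ^ bsum m b)
           = rees_ideal m b"
proof -
  let ?n = "bsum m b"
  have "{i \<in> {1..m}. b i \<noteq> 0} \<noteq> {}"
    using assms(2) by (metis card.empty not_numeral_le_zero)
  then obtain i where "i \<in> {1..m}" "b i \<noteq> 0"
    by blast
  then have n: "0 < ?n"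
    using b_le_bsum[of i m b] by simp
  have bound: "real ((m - 1) * (?n - 1)) \<le> real m * real_of_int l"
    using assms(1,3) n by (simp add: pos_divide_le_eq mult.commute of_nat_diff)
  then have "0 \<le> real m * real_of_int l"
    by (rule order_trans[OF of_nat_0_le_iff])
  then have "real m * real_of_int l = real (m * nat l)"
    using assms(1) by (simp add: zero_le_mult_iff)
  then have "(m - 1) * (?n - 1) \<le> m * nat l"
    using bound by (simp only: of_nat_le_iff)
  moreover have "(m - 1) * (?n - 1) \<le> m * ?n"
    by (intro mult_le_mono) auto
  ultimately show ?thesis
    using colon_eq_rees_ideal[OF n] by blast
qed

end
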